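(* Let $\mathcal{L}\subseteq\mathcal{L}_c$ be a class of latency functions and consider a parallel-link network with $n=2$ links, unit demand and $\ell_1,\ell_2\in\mathcal{L}$. Let $x^*$ be an optimal flow, let $t\in\mathcal{T}(\infty)$ and suppose $x_1(t)>0$, $x_2(t)>0$. If there is $i\in\{1,2\}$ with $x_i(t)>x^*_i$ and $x_i(t)\ge\frac12$, then $$C(x(t))\le\frac{1}{1-\mu_2(\mathcal{L})}\,C(x^* ).$$
   Context: $\mathcal{L}_c$: strictly increasing, convex, continuously differentiable functions $\mathbb{R}_+\to\mathbb{R}_+$. Flows $x\in\mathbb{R}^2_+$ with $x_1+x_2=1$; $C(x)=\sum_i\ell_i(x_i)x_i$; $x^*$ minimizes $C$ over flows. For tolls $t$, $x(t)$ is the unique Wardrop equilibrium for $t$ (for all $i,j$ with $x_i>0$: $\ell_i(x_i)+t_i\le\ell_j(x_j)+t_j$); $\Pi_i(t)=t_ix_i(t)$; $\mathcal{T}(\infty)$ is the set of $t\in\mathbb{R}^2_+$ with $\Pi_i(t_i,t_{-i})\ge\Pi_i(t'_i,t_{-i})$ for all $i$ and all $t'_i\ge0$ (flow recomputed). For $\ell\in\mathcal{L}$ define $\mu_2(\ell)=\sup_{x\ge\frac12,\ 0\le x^*\le x}\frac{(\ell(x)-\ell(x^* ))(x^*+1-2x)}{\ell(x)}$, and $\mu_2(\mathcal{L})=\sup_{\ell\in\mathcal{L}}\mu_2(\ell)$ (which lies in $[0,1]$). *)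

theory Defs
  imports "HOL-Analysis.Analysis"
begin

definition latency_c :: "(real \<Rightarrow> real) \<Rightarrow> bool" where
  "latency_c l \<longleftrightarrow>
     (\<forall>x\<ge>0. l x \<ge> 0) \<and>
     strict_mono_on {0..} l \<and>
     convex_on {0..} l \<and>
     (\<exists>l'. (\<forall>x\<ge>0. (l has_real_derivative l' x) (at x within {0..})) \<and>
           continuous_on {0..} l')"

definition is_flow :: "real \<times> real \<Rightarrow> bool" where
  "is_flow x \<longleftrightarrow> fst x \<ge> 0 \<and> snd x \<ge> 0 \<and> fst x + snd x = 1"

definition cost :: "(real \<Rightarrow> real) \<Rightarrow> (real \<Rightarrow> real) \<Rightarrow> real \<times> real \<Rightarrow> real" where
  "cost l1 l2 x = l1 (fst x) * fst x + l2 (snd x) * snd x"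

definition optimal_flow :: "(real \<Rightarrow> real) \<Rightarrow> (real \<Rightarrow> real) \<Rightarrow> real \<times> real \<Rightarrow> bool" where
  "optimal_flow l1 l2 x \<longleftrightarrow> is_flow x \<and> (\<forall>y. is_flow y \<longrightarrow> cost l1 l2 x \<le> cost l1 l2 y)"

text \<open>Wardrop equilibrium for tolls t: for all i,j with x_i > 0,
  l_i(x_i)+t_i <= l_j(x_j)+t_j (the cases i = j are trivial).\<close>
definition wardrop :: "(real \<Rightarrow> real) \<Rightarrow> (real \<Rightarrow> real) \<Rightarrow> real \<times> real \<Rightarrow> real \<times> real \<Rightarrow> bool" where
  "wardrop l1 l2 t x \<longleftrightarrow> is_flow x \<and>
     (fst x > 0 \<longrightarrow> l1 (fst x) + fst t \<le> l2 (snd x) + snd t) \<and>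
     (snd x > 0 \<longrightarrow> l2 (snd x) + snd t \<le> l1 (fst x) + fst t)"

text \<open>x(t): the (unique) Wardrop equilibrium for tolls t.\<close>
definition eq_flow :: "(real \<Rightarrow> real) \<Rightarrow> (real \<Rightarrow> real) \<Rightarrow> real \<times> real \<Rightarrow> real \<times> real" where
  "eq_flow l1 l2 t = (THE x. wardrop l1 l2 t x)"

definition profit1 :: "(real \<Rightarrow> real) \<Rightarrow> (real \<Rightarrow> real) \<Rightarrow> real \<times> real \<Rightarrow> real" where
  "profit1 l1 l2 t = fst t * fst (eq_flow l1 l2 t)"

definition profit2 :: "(real \<Rightarrow> real) \<Rightarrow> (real \<Rightarrow> real) \<Rightarrow> real \<times> real \<Rightarrow> real" where
  "profit2 l1 l2 t = snd t * snd (eq_flow l1 l2 t)"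

text \<open>T(infinity): Nash equilibria of the pricing game with unbounded tolls.\<close>
definition toll_NE :: "(real \<Rightarrow> real) \<Rightarrow> (real \<Rightarrow> real) \<Rightarrow> real \<times> real \<Rightarrow> bool" where
  "toll_NE l1 l2 t \<longleftrightarrow> fst t \<ge> 0 \<and> snd t \<ge> 0 \<and>
     (\<forall>t1'\<ge>0. profit1 l1 l2 t \<ge> profit1 l1 l2 (t1', snd t)) \<and>
     (\<forall>t2'\<ge>0. profit2 l1 l2 t \<ge> profit2 l1 l2 (fst t, t2'))"

definition mu2 :: "(real \<Rightarrow> real) \<Rightarrow> real" where
  "mu2 l = Sup {(l x - l xs) * (xs + 1 - 2 * x) / l x | x xs. x \<ge> 1/2 \<and> 0 \<le> xs \<and> xs \<le> x}"

definition mu2_class :: "(real \<Rightarrow> real) set \<Rightarrow> real" where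
  "mu2_class L = Sup (mu2 ` L)"

end

theory Submission imports Defs begin

text \<open>Say link 1 is the overloaded one, with \<open>a = x\<^sub>1(t) \<ge> 1/2\<close> and \<open>b = x\<^sup>*\<^sub>1 < a\<close>. Moving the
equilibrium to \<open>c = a - h\<close> can be achieved either by operator 1 raising her toll or by
operator 2 lowering his toll, in both cases by the latency shift
\<open>\<delta> = l\<^sub>1(a) - l\<^sub>1(c) + l\<^sub>2(1-c) - l\<^sub>2(1-a)\<close>. Neither deviation is profitable, which gives
\<open>\<delta> c \<le> t\<^sub>1 h\<close> and \<open>t\<^sub>2 h \<le> \<delta> (1-c)\<close>, hence \<open>(t\<^sub>1 - t\<^sub>2) h \<ge> (2c-1) \<delta>\<close>. Since \<open>\<delta>/h\<close> dominates
the slope \<open>s\<close> of \<open>l\<^sub>1\<close> on \<open>[b,a]\<close> by convexity and \<open>\<delta> \<rightarrow> 0\<close> as \<open>h \<rightarrow> 0\<close>, we get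
\<open>t\<^sub>1 - t\<^sub>2 \<ge> (2a-1) s\<close>. The equilibrium condition turns this into
\<open>l\<^sub>2(1-a) \<ge> l\<^sub>1(a) + (2a-1) s\<close>, which bounds \<open>C(x(t)) - C(x\<^sup>*)\<close> by
\<open>(l\<^sub>1(a) - l\<^sub>1(b)) (b+1-2a) \<le> \<mu> l\<^sub>1(a) \<le> \<mu> C(x(t))\<close>.\<close>

lemma latency_cD:
  assumes "latency_c l"
  shows latency_c_strict_mono_on: "strict_mono_on {0..} l"
    and latency_c_convex_on: "convex_on {0..} l"
    and latency_c_nonneg: "0 \<le> x \<Longrightarrow> 0 \<le> l x"
  using assms unfolding latency_c_def by auto

lemma latency_c_continuous_on:
  assumes "latency_c l"
  shows "continuous_on {0..} l"
proof -
  obtain l' where "\<forall>x\<ge>0. (l has_real_derivative l' x) (at x within {0..})"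
    using assms unfolding latency_c_def by blast
  then show ?thesis
    unfolding continuous_on_eq_continuous_within by (auto intro: DERIV_continuous)
qed

lemma latency_c_pos:
  assumes "latency_c l" "0 < x"
  shows "0 < l x"
proof -
  have "l 0 < l x"
    using latency_c_strict_mono_on[OF assms(1)] assms(2) by (auto simp: strict_mono_on_def)
  with latency_c_nonneg[OF assms(1), of 0] show ?thesis by simp
qed

lemma wardrop_interior_iff:
  assumes "0 < c" "c < 1"
  shows "wardrop l1 l2 t (c, 1 - c) \<longleftrightarrow> l1 c + fst t = l2 (1 - c) + snd t"
  using assms by (auto simp: wardrop_def is_flow_def)

lemma wardrop_swap:
  "wardrop l2 l1 (prod.swap t) (prod.swap x) \<longleftrightarrow> wardrop l1 l2 t x"
  by (auto simp: wardrop_def is_flow_def)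

lemma wardrop_exists:
  assumes "continuous_on {0..} l1" "continuous_on {0..} l2"
  shows "\<exists>x. wardrop l1 l2 t x"
proof -
  define g where "g p = l1 p + fst t - l2 (1 - p) - snd t" for p
  have "continuous_on {0..1} g"
    unfolding g_def using assms
    by (intro continuous_intros continuous_on_compose2[OF assms(1)]
        continuous_on_compose2[OF assms(2)]) auto
  consider "0 \<le> g 0" | "g 1 \<le> 0" | "g 0 < 0" "0 < g 1" by linarith
  then show ?thesis
  proof cases
    case 1
    then have "wardrop l1 l2 t (0, 1)" by (auto simp: wardrop_def is_flow_def g_def)
    then show ?thesis ..
  next
    case 2
    then have "wardrop l1 l2 t (1, 0)" by (auto simp: wardrop_def is_flow_def g_def)
    then show ?thesis ..
  next
    case 3
    with \<open>continuous_on {0..1} g\<close> obtain p where "0 \<le> p" "p \<le> 1" "g p = 0"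
      using IVT'[of g 0 0 1] by auto
    then have "wardrop l1 l2 t (p, 1 - p)" by (auto simp: wardrop_def is_flow_def g_def)
    then show ?thesis ..
  qed
qed

text \<open>Moving flow from link 2 to link 1 strictly widens the latency-plus-toll gap
between them, so the equilibrium split is determined.\<close>
lemma wardrop_unique:
  assumes "strict_mono_on {0..} l1" "strict_mono_on {0..} l2"
    and "wardrop l1 l2 t x" "wardrop l1 l2 t y"
  shows "x = y"
proof -
  have no_lt: "\<not> fst x < fst y" if "wardrop l1 l2 t x" "wardrop l1 l2 t y" for x y
  proof
    assume lt: "fst x < fst y"
    from that have x: "snd x = 1 - fst x" "0 \<le> fst x" and y: "snd y = 1 - fst y" "fst y \<le> 1"
      by (auto simp: wardrop_def is_flow_def)
    have "l1 (fst x) < l1 (fst y)" "l2 (1 - fst y) < l2 (1 - fst x)"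
      using assms(1,2) lt x y by (auto simp: strict_mono_on_def)
    moreover have "l1 (fst y) + fst t \<le> l2 (snd y) + snd t" "l2 (snd x) + snd t \<le> l1 (fst x) + fst t"
      using that lt x y by (auto simp: wardrop_def)
    ultimately show False using x y by simp
  qed
  have "fst x = fst y"
    using no_lt[OF assms(3,4)] no_lt[OF assms(4,3)] by simp
  with assms(3,4) show ?thesis
    by (auto simp: wardrop_def is_flow_def prod_eq_iff)
qed

lemma wardrop_ex1:
  assumes "latency_c l1" "latency_c l2"
  shows "\<exists>!x. wardrop l1 l2 t x"
  using wardrop_exists[OF latency_c_continuous_on[OF assms(1)] latency_c_continuous_on[OF assms(2)]]
    wardrop_unique[OF latency_c_strict_mono_on[OF assms(1)] latency_c_strict_mono_on[OF assms(2)]]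
  by blast

lemma eq_flow_wardrop:
  assumes "latency_c l1" "latency_c l2"
  shows "wardrop l1 l2 t (eq_flow l1 l2 t)"
  unfolding eq_flow_def using theI'[OF wardrop_ex1[OF assms]] .

lemma eq_flow_eqI:
  assumes "latency_c l1" "latency_c l2" "wardrop l1 l2 t x"
  shows "eq_flow l1 l2 t = x"
  unfolding eq_flow_def using the1_equality[OF wardrop_ex1[OF assms(1,2)] assms(3)] .

lemma eq_flow_swap:
  assumes "latency_c l1" "latency_c l2"
  shows "eq_flow l2 l1 (prod.swap t) = prod.swap (eq_flow l1 l2 t)"
  using assms by (intro eq_flow_eqI) (auto simp: wardrop_swap eq_flow_wardrop)

lemma profit1_swap:
  assumes "latency_c l1" "latency_c l2"
  shows "profit1 l2 l1 (prod.swap t) = profit2 l1 l2 t"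
  using assms by (simp add: profit1_def profit2_def eq_flow_swap)

lemma profit2_swap:
  assumes "latency_c l1" "latency_c l2"
  shows "profit2 l2 l1 (prod.swap t) = profit1 l1 l2 t"
  using assms by (simp add: profit1_def profit2_def eq_flow_swap)

lemma toll_NE_swap:
  assumes "latency_c l1" "latency_c l2"
  shows "toll_NE l2 l1 (prod.swap t) \<longleftrightarrow> toll_NE l1 l2 t"
proof -
  have "profit1 l2 l1 (t', fst t) = profit2 l1 l2 (fst t, t')"
    and "profit2 l2 l1 (snd t, t') = profit1 l1 l2 (t', snd t)" for t'
    using profit1_swap[OF assms, of "(fst t, t')"] profit2_swap[OF assms, of "(t', snd t)"]
    by simp_all
  then show ?thesis
    using assms by (auto simp: toll_NE_def profit1_swap profit2_swap)
qed

lemma cost_swap: "cost l2 l1 (prod.swap x) = cost l1 l2 x"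
  by (simp add: cost_def)

lemma is_flow_swap: "is_flow (prod.swap x) \<longleftrightarrow> is_flow x"
  by (auto simp: is_flow_def)

lemma toll_NE_deviation1:
  assumes "latency_c l1" "latency_c l2" "toll_NE l1 l2 t"
    and "0 \<le> t'" "0 < c" "c < 1" "l1 c + t' = l2 (1 - c) + snd t"
  shows "t' * c \<le> profit1 l1 l2 t"
proof -
  have "eq_flow l1 l2 (t', snd t) = (c, 1 - c)"
    using assms by (intro eq_flow_eqI) (auto simp: wardrop_interior_iff)
  then have "profit1 l1 l2 (t', snd t) = t' * c" by (simp add: profit1_def)
  with assms(3,4) show ?thesis by (auto simp: toll_NE_def)
qed

lemma toll_NE_deviation2:
  assumes "latency_c l1" "latency_c l2" "toll_NE l1 l2 t"
    and "0 \<le> t'" "0 < c" "c < 1" "l1 c + fst t = l2 (1 - c) + t'"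
  shows "t' * (1 - c) \<le> profit2 l1 l2 t"
proof -
  have "toll_NE l2 l1 (prod.swap t)" using assms(1-3) by (simp add: toll_NE_swap)
  then have "t' * (1 - c) \<le> profit1 l2 l1 (prod.swap t)"
    using assms by (intro toll_NE_deviation1) auto
  with assms(1,2) show ?thesis by (simp add: profit1_swap)
qed

lemma toll_deviation_gap:
  fixes l1 l2 :: "real \<Rightarrow> real"
  assumes mono1: "strict_mono_on {0..} l1" and mono2: "strict_mono_on {0..} l2"
    and c: "0 < c" "c < a" "a \<le> 1" and t: "0 \<le> t1" "0 \<le> t2"
    and eq: "l1 a + t1 = l2 (1 - a) + t2"
    and dev1: "\<And>t' c. 0 \<le> t' \<Longrightarrow> 0 < c \<Longrightarrow> c < 1 \<Longrightarrow> l1 c + t' = l2 (1 - c) + t2 \<Longrightarrow> t' * c \<le> t1 * a"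
    and dev2: "\<And>t' c. 0 \<le> t' \<Longrightarrow> 0 < c \<Longrightarrow> c < 1 \<Longrightarrow> l1 c + t1 = l2 (1 - c) + t' \<Longrightarrow> t' * (1 - c) \<le> t2 * (1 - a)"
  shows "(2 * c - 1) * (l1 a - l1 c + l2 (1 - c) - l2 (1 - a)) \<le> (t1 - t2) * (a - c)"
proof -
  define \<delta> where "\<delta> = l1 a - l1 c + l2 (1 - c) - l2 (1 - a)"
  have "l1 c < l1 a" "l2 (1 - a) < l2 (1 - c)"
    using mono1 mono2 c by (auto simp: strict_mono_on_def)
  then have \<delta>: "0 < \<delta>" by (simp add: \<delta>_def)
  have "(t1 + \<delta>) * c \<le> t1 * a"
    using dev1[of "t1 + \<delta>" c] c t \<delta> eq by (simp add: \<delta>_def)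
  then have raise1: "\<delta> * c \<le> t1 * (a - c)" by (simp add: algebra_simps)
  have lower2: "t2 * (a - c) \<le> \<delta> * (1 - c)"
  proof (cases "\<delta> \<le> t2")
    case True
    then have "(t2 - \<delta>) * (1 - c) \<le> t2 * (1 - a)"
      using dev2[of "t2 - \<delta>" c] c eq by (simp add: \<delta>_def)
    then show ?thesis by (simp add: algebra_simps)
  next
    case False
    then have "t2 * (a - c) \<le> \<delta> * (a - c)" using c by (intro mult_right_mono) auto
    also have "\<dots> \<le> \<delta> * (1 - c)" using \<delta> c by (intro mult_left_mono) auto
    finally show ?thesis .
  qed
  from raise1 lower2 show ?thesis by (simp add: \<delta>_def algebra_simps)
qed

lemma toll_gap_ge_slope:
  fixes l1 l2 :: "real \<Rightarrow> real"
  assumes mono1: "strict_mono_on {0..} l1" and mono2: "strict_mono_on {0..} l2"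
    and convex1: "convex_on {0..} l1"
    and cont1: "continuous_on {0..} l1" and cont2: "continuous_on {0..} l2"
    and a: "1/2 \<le> a" "a < 1" and b: "0 \<le> b" "b < a" and t: "0 \<le> t1" "0 \<le> t2"
    and eq: "l1 a + t1 = l2 (1 - a) + t2"
    and dev1: "\<And>t' c. 0 \<le> t' \<Longrightarrow> 0 < c \<Longrightarrow> c < 1 \<Longrightarrow> l1 c + t' = l2 (1 - c) + t2 \<Longrightarrow> t' * c \<le> t1 * a"
    and dev2: "\<And>t' c. 0 \<le> t' \<Longrightarrow> 0 < c \<Longrightarrow> c < 1 \<Longrightarrow> l1 c + t1 = l2 (1 - c) + t' \<Longrightarrow> t' * (1 - c) \<le> t2 * (1 - a)"
  shows "(2 * a - 1) * ((l1 a - l1 b) / (a - b)) \<le> t1 - t2"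
proof -
  define s where "s = (l1 a - l1 b) / (a - b)"
  define \<delta> where "\<delta> c = l1 a - l1 c + l2 (1 - c) - l2 (1 - a)" for c
  have bound: "(2 * a - 1) * s - 2 * \<delta> c \<le> t1 - t2" if c: "b < c" "c < a" for c
  proof -
    have "(l1 b - l1 a) / (b - a) \<le> (l1 c - l1 a) / (c - a)"
      using convex_on_slope_le[OF convex1, of b a c] b c by simp
    then have "s \<le> (l1 a - l1 c) / (a - c)"
      unfolding s_def by (metis minus_diff_eq minus_divide_divide)
    also have "\<dots> \<le> \<delta> c / (a - c)"
    proof -
      have "l2 (1 - a) < l2 (1 - c)" using mono2 a c by (auto simp: strict_mono_on_def)
      with c show ?thesis unfolding \<delta>_def by (intro divide_right_mono) auto
    qed
    finally have "(2 * a - 1) * s \<le> (2 * a - 1) * (\<delta> c / (a - c))"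
      using a by (intro mult_left_mono) auto
    also have "\<dots> = (2 * c - 1) * \<delta> c / (a - c) + 2 * \<delta> c"
      using c by (simp add: field_simps)
    also have "(2 * c - 1) * \<delta> c / (a - c) \<le> t1 - t2"
    proof -
      have "(2 * c - 1) * \<delta> c \<le> (t1 - t2) * (a - c)"
        unfolding \<delta>_def using b c a
        by (intro toll_deviation_gap[OF mono1 mono2 _ c(2) _ t eq dev1 dev2]) auto
      with c show ?thesis by (subst pos_divide_le_eq) auto
    qed
    finally show ?thesis by simp
  qed
  have "isCont l1 a" "isCont l2 (1 - a)"
    using continuous_on_interior[OF cont1] continuous_on_interior[OF cont2] a by auto
  then have "isCont \<delta> a"
    unfolding \<delta>_def using isCont_o2[where f = "\<lambda>c. 1 - c" and a = a and g = l2]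
    by (intro continuous_intros) auto
  then have "((\<lambda>c. (2 * a - 1) * s - 2 * \<delta> c) \<longlongrightarrow> (2 * a - 1) * s - 2 * \<delta> a) (at_left a)"
    by (intro tendsto_intros) (simp add: isCont_def filterlim_at_split)
  moreover have "\<forall>\<^sub>F c in at_left a. (2 * a - 1) * s - 2 * \<delta> c \<le> t1 - t2"
    using eventually_at_left_real[OF b(2)] by eventually_elim (auto intro: bound)
  ultimately have "(2 * a - 1) * s - 2 * \<delta> a \<le> t1 - t2"
    by (intro tendsto_le[OF trivial_limit_at_left_real tendsto_const])
  then show ?thesis by (simp add: s_def \<delta>_def)
qed

lemma cost_le_of_latency_gap:
  fixes l1 l2 :: "real \<Rightarrow> real"
  assumes mono2: "strict_mono_on {0..} l2"
    and a: "1/2 \<le> a" "a \<le> 1" and b: "0 \<le> b" "b < a" and l1b: "l1 b \<le> l1 a"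
    and gap: "l1 a + (2 * a - 1) * ((l1 a - l1 b) / (a - b)) \<le> l2 (1 - a)"
    and ratio: "(l1 a - l1 b) * (b + 1 - 2 * a) \<le> M * l1 a" and M: "0 \<le> M" "M < 1"
  shows "l1 a * a + l2 (1 - a) * (1 - a) \<le> 1 / (1 - M) * (l1 b * b + l2 (1 - b) * (1 - b))"
proof -
  define C where "C = l1 a * a + l2 (1 - a) * (1 - a)"
  define Cs where "Cs = l1 b * b + l2 (1 - b) * (1 - b)"
  have "(l1 a + (2 * a - 1) * ((l1 a - l1 b) / (a - b))) * (a - b) \<le> l2 (1 - a) * (a - b)"
    using gap b by (intro mult_right_mono) auto
  also have "(l1 a + (2 * a - 1) * ((l1 a - l1 b) / (a - b))) * (a - b)
      = l1 a * (a - b) + (2 * a - 1) * (l1 a - l1 b)"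
    using b by (simp add: distrib_right)
  finally have gap': "l1 a * (a - b) + (2 * a - 1) * (l1 a - l1 b) \<le> l2 (1 - a) * (a - b)" .
  have "l2 (1 - a) * (1 - b) \<le> l2 (1 - b) * (1 - b)"
    using mono2 a b by (intro mult_right_mono) (auto simp: strict_mono_on_def less_imp_le)
  with gap' have "C - Cs \<le> (l1 a - l1 b) * (b + 1 - 2 * a)"
    by (simp add: C_def Cs_def algebra_simps)
  also have "\<dots> \<le> M * l1 a" by (rule ratio)
  also have "\<dots> \<le> M * C"
  proof -
    have "0 \<le> (2 * a - 1) * ((l1 a - l1 b) / (a - b))" using a b l1b by simp
    with gap have "l1 a * a + l1 a * (1 - a) \<le> C"
      using a by (simp add: C_def mult_right_mono)
    then have "l1 a \<le> C" by (simp add: algebra_simps)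
    with M show ?thesis by (simp add: mult_left_mono)
  qed
  finally have "C * (1 - M) \<le> Cs" by (simp add: algebra_simps)
  with M show ?thesis by (simp add: C_def Cs_def field_simps)
qed

lemma mu2_ratio_le_half:
  assumes "latency_c l" "1/2 \<le> x" "0 \<le> xs" "xs \<le> x"
  shows "(l x - l xs) * (xs + 1 - 2 * x) / l x \<le> 1/2"
proof -
  have lx: "0 < l x" using latency_c_pos assms by auto
  have lxs: "l xs \<le> l x" "0 \<le> l xs"
    using latency_c_strict_mono_on[OF assms(1)] latency_c_nonneg[OF assms(1)] assms
    by (auto simp: strict_mono_on_def le_less)
  have "(l x - l xs) * (xs + 1 - 2 * x) \<le> l x * (1/2)"
  proof (cases "0 \<le> xs + 1 - 2 * x")
    case True
    then have "(l x - l xs) * (xs + 1 - 2 * x) \<le> l x * (xs + 1 - 2 * x)"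
      using lxs by (intro mult_right_mono) auto
    also have "\<dots> \<le> l x * (1/2)" using lx assms by (intro mult_left_mono) auto
    finally show ?thesis .
  next
    case False
    then have "(l x - l xs) * (xs + 1 - 2 * x) \<le> 0" using lxs by (intro mult_nonneg_nonpos) auto
    then show ?thesis using lx by simp
  qed
  with lx show ?thesis by (simp add: divide_le_eq)
qed

lemma
  assumes "latency_c l"
  shows mu2_ge_ratio: "\<And>x xs. 1/2 \<le> x \<Longrightarrow> 0 \<le> xs \<Longrightarrow> xs \<le> x \<Longrightarrow>
           (l x - l xs) * (xs + 1 - 2 * x) / l x \<le> mu2 l"
    and mu2_le_half: "mu2 l \<le> 1/2"
    and mu2_nonneg: "0 \<le> mu2 l"
proof -
  let ?S = "{(l x - l xs) * (xs + 1 - 2 * x) / l x | x xs. 1/2 \<le> x \<and> 0 \<le> xs \<and> xs \<le> x}"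
  have ub: "r \<le> 1/2" if "r \<in> ?S" for r using that mu2_ratio_le_half[OF assms] by auto
  then have "bdd_above ?S" by (intro bdd_aboveI)
  then show ge: "(l x - l xs) * (xs + 1 - 2 * x) / l x \<le> mu2 l"
    if "1/2 \<le> x" "0 \<le> xs" "xs \<le> x" for x xs
    unfolding mu2_def using that by (intro cSup_upper) auto
  have "?S \<noteq> {}" by (auto intro!: exI[of _ "1/2"])
  with ub show "mu2 l \<le> 1/2" unfolding mu2_def by (intro cSup_least) auto
  show "0 \<le> mu2 l" using ge[of "1/2" "1/2"] by simp
qed

lemma
  assumes "\<forall>l\<in>L. latency_c l" "l \<in> L"
  shows mu2_le_mu2_class: "mu2 l \<le> mu2_class L"
    and mu2_class_le_half: "mu2_class L \<le> 1/2"
proof -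
  have ub: "r \<le> 1/2" if "r \<in> mu2 ` L" for r using that assms(1) mu2_le_half by auto
  show "mu2 l \<le> mu2_class L"
    unfolding mu2_class_def using ub assms(2) by (intro cSup_upper bdd_aboveI[of _ "1/2"]) auto
  show "mu2_class L \<le> 1/2"
    unfolding mu2_class_def using ub assms(2) by (intro cSup_least) auto
qed

lemma toll_NE_cost_le_overloaded_first_link:
  assumes lat1: "latency_c l1" and lat2: "latency_c l2"
    and flow: "is_flow y" and NE: "toll_NE l1 l2 t"
    and x: "fst (eq_flow l1 l2 t) < 1" "fst y < fst (eq_flow l1 l2 t)" "1/2 \<le> fst (eq_flow l1 l2 t)"
    and M: "mu2 l1 \<le> M" "M < 1"
  shows "cost l1 l2 (eq_flow l1 l2 t) \<le> 1 / (1 - M) * cost l1 l2 y"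
proof -
  note mono1 = latency_c_strict_mono_on[OF lat1] and mono2 = latency_c_strict_mono_on[OF lat2]
  define a where "a = fst (eq_flow l1 l2 t)"
  define b where "b = fst y"
  obtain t1 t2 where t: "t = (t1, t2)" by fastforce
  have w: "wardrop l1 l2 t (eq_flow l1 l2 t)" by (rule eq_flow_wardrop[OF lat1 lat2])
  then have xa: "eq_flow l1 l2 t = (a, 1 - a)"
    by (auto simp: a_def wardrop_def is_flow_def prod_eq_iff)
  have yb: "y = (b, 1 - b)" "0 \<le> b" using flow by (auto simp: b_def is_flow_def prod_eq_iff)
  have a: "1/2 \<le> a" "a < 1" "b < a" using x by (simp_all add: a_def b_def)
  have "wardrop l1 l2 t (a, 1 - a)" using w by (simp add: xa)
  then have eq: "l1 a + t1 = l2 (1 - a) + t2" using a by (simp add: wardrop_interior_iff t)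
  have t0: "0 \<le> t1" "0 \<le> t2" using NE t by (auto simp: toll_NE_def)
  have profits: "profit1 l1 l2 t = t1 * a" "profit2 l1 l2 t = t2 * (1 - a)"
    using xa t by (simp_all add: profit1_def profit2_def)
  have dev1: "t' * c \<le> t1 * a"
    if "0 \<le> t'" "0 < c" "c < 1" "l1 c + t' = l2 (1 - c) + t2" for t' c
    using toll_NE_deviation1[OF lat1 lat2 NE that(1-3)] that(4) profits t by simp
  have dev2: "t' * (1 - c) \<le> t2 * (1 - a)"
    if "0 \<le> t'" "0 < c" "c < 1" "l1 c + t1 = l2 (1 - c) + t'" for t' c
    using toll_NE_deviation2[OF lat1 lat2 NE that(1-3)] that(4) profits t by simp
  have gap: "(2 * a - 1) * ((l1 a - l1 b) / (a - b)) \<le> t1 - t2"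
    by (rule toll_gap_ge_slope[OF mono1 mono2 latency_c_convex_on[OF lat1]
          latency_c_continuous_on[OF lat1] latency_c_continuous_on[OF lat2]
          a(1,2) yb(2) a(3) t0 eq dev1 dev2])
  have "(l1 a - l1 b) * (b + 1 - 2 * a) / l1 a \<le> M"
    using mu2_ge_ratio[OF lat1 a(1) yb(2)] a M by force
  then have ratio: "(l1 a - l1 b) * (b + 1 - 2 * a) \<le> M * l1 a"
    using latency_c_pos[OF lat1, of a] a yb by (simp add: divide_le_eq)
  have "l1 b \<le> l1 a"
    using mono1 a yb by (auto simp: strict_mono_on_def less_imp_le)
  with gap eq have "l1 a * a + l2 (1 - a) * (1 - a) \<le> 1 / (1 - M) * (l1 b * b + l2 (1 - b) * (1 - b))"
    by (intro cost_le_of_latency_gap[OF mono2 a(1) _ yb(2) a(3) _ _ ratio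
          order_trans[OF mu2_nonneg[OF lat1] M(1)] M(2)]) (use a in auto)
  then show ?thesis using xa yb by (simp add: cost_def)
qed

theorem mainTheorem11:
  fixes L :: "(real \<Rightarrow> real) set"
    and l1 l2 :: "real \<Rightarrow> real"
    and xs t :: "real \<times> real"
  assumes L_sub: "\<forall>l\<in>L. latency_c l"
    and l1L: "l1 \<in> L" and l2L: "l2 \<in> L"
    and opt: "optimal_flow l1 l2 xs"
    and NE: "toll_NE l1 l2 t"
    and pos1: "fst (eq_flow l1 l2 t) > 0"
    and pos2: "snd (eq_flow l1 l2 t) > 0"
    and link: "(fst (eq_flow l1 l2 t) > fst xs \<and> fst (eq_flow l1 l2 t) \<ge> 1/2) \<or>
               (snd (eq_flow l1 l2 t) > snd xs \<and> snd (eq_flow l1 l2 t) \<ge> 1/2)"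
  shows "cost l1 l2 (eq_flow l1 l2 t) \<le> 1 / (1 - mu2_class L) * cost l1 l2 xs"
proof -
  have lat: "latency_c l1" "latency_c l2" using L_sub l1L l2L by auto
  have M: "mu2 l1 \<le> mu2_class L" "mu2 l2 \<le> mu2_class L" "mu2_class L < 1"
    using mu2_le_mu2_class[OF L_sub] mu2_class_le_half[OF L_sub l1L] l1L l2L by auto
  have flow: "is_flow xs" using opt by (simp add: optimal_flow_def)
  have interior: "fst (eq_flow l1 l2 t) < 1" "snd (eq_flow l1 l2 t) < 1"
    using eq_flow_wardrop[OF lat, of t] pos1 pos2 by (auto simp: wardrop_def is_flow_def)
  from link show ?thesis
  proof
    assume "fst (eq_flow l1 l2 t) > fst xs \<and> fst (eq_flow l1 l2 t) \<ge> 1/2"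
    then show ?thesis
      using toll_NE_cost_le_overloaded_first_link[OF lat flow NE interior(1) _ _ M(1,3)] by blast
  next
    assume "snd (eq_flow l1 l2 t) > snd xs \<and> snd (eq_flow l1 l2 t) \<ge> 1/2"
    then have "cost l2 l1 (eq_flow l2 l1 (prod.swap t)) \<le> 1 / (1 - mu2_class L) * cost l2 l1 (prod.swap xs)"
      using lat flow NE interior(2) M(2,3)
      by (intro toll_NE_cost_le_overloaded_first_link)
        (simp_all add: eq_flow_swap toll_NE_swap is_flow_swap)
    then show ?thesis using lat by (simp add: eq_flow_swap cost_swap)
  qed
qed

end
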